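(* Let $G=(V,q)$ be a reversible connected graph. Then there exists a perfect coupling graph of $G$.
   Context: A graph $G=(V,q)$ consists of a countable set $V$ and a function $q:V\times V\to[0,\infty)$ such that $\#\{y:q(x,y)>0\}<\infty$ for every $x\in V$; its Laplacian is $\Delta f(x)=\sum_y q(x,y)(f(y)-f(x))$. $G$ is reversible if there is $m:V\to(0,\infty)$ with $q(x,y)m(x)=q(y,x)m(y)$. For reversible $G$, $x\sim y$ means $q(x,y)>0$ and $d$ is the combinatorial graph distance (finite since $G$ is connected). $q_{\min}:=\inf\{q(x,y):q(x,y)>0\}$. $(f\otimes g)(x,y)=f(x)g(y)$. A graph $\widetilde G=(V\times V,\widetilde q)$ with Laplacian $\widetilde\Delta$ is a coupling graph of $G$ if $\widetilde\Delta(f\otimes 1)=\Delta f\otimes 1$ and $\widetilde\Delta(1\otimes f)=1\otimes\Delta f$ for all $f:V\to\mathbb R$. A transport plan from $x_0$ to $y_0$ is $\rho:V\times V\to[0,\infty)$ with $\sum_{y}\rho(x,y)=q(x_0,x)$ for $x\neq x_0$ and $\sum_x\rho(x,y)=q(y_0,y)$ for $y\ne y_0$; $\mathrm{cost}(\rho)=\sum_{x,y}\rho(x,y)(d(x_0,y_0)-d(x,y))$; $\mu_\rho(k)=\sum_{d(x,y)-d(x_0,y_0)=k}\rho(x,y)$; $\rho$ is optimal if it maximizes cost among transport plans from $x_0$ to $y_0$. A coupling graph $\widetilde G$ is perfect if for all $x_0,y_0\in V$ the plan $\rho_{x_0y_0}:=\widetilde q((x_0,y_0),(\cdot,\cdot))$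 is an optimal transport plan from $x_0$ to $y_0$, satisfies $\mu_{\rho_{x_0y_0}}(k)=0$ whenever $|k|>1$, and satisfies $\mu_{\rho_{x_0y_0}}(-1)\ge 2q_{\min}$ whenever $x_0\ne y_0$. *)

theory Defs
  imports "HOL-Analysis.Analysis"
begin

definition is_graph :: "('b \<Rightarrow> 'b \<Rightarrow> real) \<Rightarrow> bool" where
  "is_graph q \<longleftrightarrow> (\<forall>x y. 0 \<le> q x y) \<and> (\<forall>x. finite {y. 0 < q x y})"

definition laplacian :: "('b \<Rightarrow> 'b \<Rightarrow> real) \<Rightarrow> ('b \<Rightarrow> real) \<Rightarrow> 'b \<Rightarrow> real" where
  "laplacian q f x = (\<Sum>y\<in>{y. 0 < q x y}. q x y * (f y - f x))"

definition reversible :: "('b \<Rightarrow> 'b \<Rightarrow> real) \<Rightarrow> bool" where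
  "reversible q \<longleftrightarrow> (\<exists>m::'b \<Rightarrow> real. (\<forall>x. 0 < m x) \<and> (\<forall>x y. q x y * m x = q y x * m y))"

definition adj :: "('b \<Rightarrow> 'b \<Rightarrow> real) \<Rightarrow> 'b \<Rightarrow> 'b \<Rightarrow> bool" where
  "adj q x y \<longleftrightarrow> 0 < q x y"

definition connected_graph :: "('b \<Rightarrow> 'b \<Rightarrow> real) \<Rightarrow> bool" where
  "connected_graph q \<longleftrightarrow> (\<forall>x y. \<exists>n. (adj q ^^ n) x y)"

definition gdist :: "('b \<Rightarrow> 'b \<Rightarrow> real) \<Rightarrow> 'b \<Rightarrow> 'b \<Rightarrow> nat" where
  "gdist q x y = (LEAST n. (adj q ^^ n) x y)"

definition qmin :: "('b \<Rightarrow> 'b \<Rightarrow> real) \<Rightarrow> real" where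
  "qmin q = Inf {q x y | x y. 0 < q x y}"

definition tensor :: "('b \<Rightarrow> real) \<Rightarrow> ('b \<Rightarrow> real) \<Rightarrow> 'b \<times> 'b \<Rightarrow> real" where
  "tensor f g = (\<lambda>(x, y). f x * g y)"

definition coupling_graph ::
  "('b \<Rightarrow> 'b \<Rightarrow> real) \<Rightarrow> ('b \<times> 'b \<Rightarrow> 'b \<times> 'b \<Rightarrow> real) \<Rightarrow> bool" where
  "coupling_graph q qt \<longleftrightarrow> is_graph qt \<and>
     (\<forall>f. laplacian qt (tensor f (\<lambda>_. 1)) = tensor (laplacian q f) (\<lambda>_. 1)) \<and>
     (\<forall>f. laplacian qt (tensor (\<lambda>_. 1) f) = tensor (\<lambda>_. 1) (laplacian q f))"

definition transport_plan ::
  "('b \<Rightarrow> 'b \<Rightarrow> real) \<Rightarrow> 'b \<Rightarrow> 'b \<Rightarrow> ('b \<times> 'b \<Rightarrow> real) \<Rightarrow> bool" where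
  "transport_plan q x0 y0 \<rho> \<longleftrightarrow> (\<forall>p. 0 \<le> \<rho> p) \<and>
     (\<forall>x. x \<noteq> x0 \<longrightarrow> ((\<lambda>y. \<rho> (x, y)) has_sum q x0 x) UNIV) \<and>
     (\<forall>y. y \<noteq> y0 \<longrightarrow> ((\<lambda>x. \<rho> (x, y)) has_sum q y0 y) UNIV)"

definition tp_cost :: "('b \<Rightarrow> 'b \<Rightarrow> real) \<Rightarrow> 'b \<Rightarrow> 'b \<Rightarrow> ('b \<times> 'b \<Rightarrow> real) \<Rightarrow> real" where
  "tp_cost q x0 y0 \<rho> =
     (\<Sum>\<^sub>\<infinity>(x, y). \<rho> (x, y) * (real (gdist q x0 y0) - real (gdist q x y)))"

definition tp_mu :: "('b \<Rightarrow> 'b \<Rightarrow> real) \<Rightarrow> 'b \<Rightarrow> 'b \<Rightarrow> ('b \<times> 'b \<Rightarrow> real) \<Rightarrow> int \<Rightarrow> real" where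
  "tp_mu q x0 y0 \<rho> k =
     (\<Sum>\<^sub>\<infinity>(x, y)\<in>{(x, y). int (gdist q x y) - int (gdist q x0 y0) = k}. \<rho> (x, y))"

definition optimal_plan ::
  "('b \<Rightarrow> 'b \<Rightarrow> real) \<Rightarrow> 'b \<Rightarrow> 'b \<Rightarrow> ('b \<times> 'b \<Rightarrow> real) \<Rightarrow> bool" where
  "optimal_plan q x0 y0 \<rho> \<longleftrightarrow> transport_plan q x0 y0 \<rho> \<and>
     (\<forall>\<rho>'. transport_plan q x0 y0 \<rho>' \<longrightarrow> tp_cost q x0 y0 \<rho>' \<le> tp_cost q x0 y0 \<rho>)"

definition perfect_coupling ::
  "('b \<Rightarrow> 'b \<Rightarrow> real) \<Rightarrow> ('b \<times> 'b \<Rightarrow> 'b \<times> 'b \<Rightarrow> real) \<Rightarrow> bool" where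
  "perfect_coupling q qt \<longleftrightarrow> coupling_graph q qt \<and>
     (\<forall>x0 y0. optimal_plan q x0 y0 (qt (x0, y0)) \<and>
        (\<forall>k. \<bar>k\<bar> > 1 \<longrightarrow> tp_mu q x0 y0 (qt (x0, y0)) k = 0) \<and>
        (x0 \<noteq> y0 \<longrightarrow> tp_mu q x0 y0 (qt (x0, y0)) (-1) \<ge> 2 * qmin q))"

end

theory Submission
  imports Defs
begin

text \<open>
  Every transport plan from \<open>x0\<close> to \<open>y0\<close> lives on the finite set of pairs of closed
  neighbours, so an optimal plan exists by compactness. Moving the mass of an off-axis pair
  \<open>(x, y)\<close> to \<open>(x, y0)\<close> and to \<open>(x0, y)\<close> keeps the constrained marginals and does not
  decrease the cost as soon as \<open>d x y0 + d x0 y \<le> d x y + d x0 y0\<close>. This exchange inequality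
  holds when \<open>d x y\<close> differs from \<open>d x0 y0\<close> by 2, and when \<open>x\<close> is one step closer to
  \<open>y0\<close> than \<open>x0\<close> is (or \<open>y\<close> one step closer to \<open>x0\<close> than \<open>y0\<close> is). Emptying all these
  pairs gives an optimal plan that changes the distance by at most one and sends the whole
  weights \<open>q x0 x1\<close> and \<open>q y0 y1\<close> of two such geodesic neighbours to pairs at distance
  \<open>d x0 y0 - 1\<close>. Choosing such a plan for every pair of vertices gives the coupling graph: its
  Laplacian identities are exactly the marginal conditions.
\<close>

lemma relpowp_sym:
  assumes "\<And>x y. R x y \<Longrightarrow> R y x"
  shows "(R ^^ n) x y \<Longrightarrow> (R ^^ n) y x"
proof (induction n arbitrary: y)
  case (Suc n)
  then obtain z where "(R ^^ n) x z" "R z y" by auto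
  then show ?case using Suc.IH assms by (meson relpowp_Suc_I2)
qed simp

lemma has_sum_nonneg_term_le:
  fixes f :: "'i \<Rightarrow> real"
  assumes "\<And>j. 0 \<le> f j" "(f has_sum s) A" "i \<in> A"
  shows "f i \<le> s"
proof -
  have "(f has_sum f i) {i}" by (rule has_sum_finiteI) auto
  from has_sum_mono_neutral[OF this assms(2)] show ?thesis using assms(1,3) by auto
qed

lemma qmin_le: "0 < q x y \<Longrightarrow> qmin q \<le> q x y"
  unfolding qmin_def by (rule cInf_lower) (auto intro: bdd_belowI[of _ 0])

lemma compact_nonneg_box:
  fixes B :: "'i \<Rightarrow> real"
  shows "compact {f. \<forall>i. f i \<in> {0..B i}}"
proof -
  have "{f. \<forall>i. f i \<in> {0..B i}} = PiE UNIV (\<lambda>i. {0..B i})"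
    by (auto simp: PiE_def extensional_def)
  moreover have "compactin (product_topology (\<lambda>i. euclidean) UNIV) (PiE UNIV (\<lambda>i. {0..B i}))"
    by (simp add: compactin_PiE)
  ultimately show ?thesis
    by (simp add: euclidean_product_topology)
qed

text \<open>The mass \<open>s (x, y)\<close> is moved to both \<open>(x, y0)\<close> and \<open>(x0, y)\<close>. This leaves the sums
  of the rows \<open>x \<noteq> x0\<close> and of the columns \<open>y \<noteq> y0\<close> unchanged, and row \<open>x0\<close> and column
  \<open>y0\<close> are unconstrained in a transport plan.\<close>
definition shift_to_axes ::
  "'a set \<Rightarrow> 'b set \<Rightarrow> 'a \<Rightarrow> 'b \<Rightarrow> ('a \<times> 'b \<Rightarrow> real) \<Rightarrow> 'a \<times> 'b \<Rightarrow> real" where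
  "shift_to_axes A B x0 y0 s = (\<lambda>(x, y).
     (if y = y0 then (\<Sum>y'\<in>B. s (x, y')) else 0) + (if x = x0 then (\<Sum>x'\<in>A. s (x', y)) else 0) - s (x, y))"

lemma shift_to_axes_row_sum:
  assumes "finite B" "y0 \<in> B" "x \<noteq> x0"
  shows "(\<Sum>y\<in>B. shift_to_axes A B x0 y0 s (x, y)) = 0"
  using assms by (simp add: shift_to_axes_def sum.distrib sum_subtractf)

lemma shift_to_axes_column_sum:
  assumes "finite A" "x0 \<in> A" "y \<noteq> y0"
  shows "(\<Sum>x\<in>A. shift_to_axes A B x0 y0 s (x, y)) = 0"
  using assms by (simp add: shift_to_axes_def sum.distrib sum_subtractf)

lemma shift_to_axes_weighted_sum:
  assumes "finite A" "finite B" "x0 \<in> A" "y0 \<in> B"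
  shows "(\<Sum>p\<in>A \<times> B. shift_to_axes A B x0 y0 s p * c p) =
    (\<Sum>(x, y)\<in>A \<times> B. s (x, y) * (c (x, y0) + c (x0, y) - c (x, y)))"
proof -
  have row: "(\<Sum>x\<in>A. \<Sum>y\<in>B. (if y = y0 then (\<Sum>y'\<in>B. s (x, y')) else 0) * c (x, y))
      = (\<Sum>x\<in>A. \<Sum>y\<in>B. s (x, y) * c (x, y0))"
    using assms by (simp add: if_distrib[of "\<lambda>a. a * _"] sum.delta sum_distrib_right cong: if_cong)
  have col: "(\<Sum>x\<in>A. \<Sum>y\<in>B. (if x = x0 then (\<Sum>x'\<in>A. s (x', y)) else 0) * c (x, y))
      = (\<Sum>x\<in>A. \<Sum>y\<in>B. s (x, y) * c (x0, y))"
    using assms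
    by (subst (1 2) sum.swap) (simp add: if_distrib[of "\<lambda>a. a * _"] sum.delta sum_distrib_right cong: if_cong)
  show ?thesis
    unfolding sum.cartesian_product' shift_to_axes_def using row col
    by (simp add: algebra_simps sum.distrib sum_subtractf)
qed

locale reversible_connected_graph =
  fixes q :: "'a \<Rightarrow> 'a \<Rightarrow> real"
  assumes graph: "is_graph q" and reversible: "reversible q" and connected: "connected_graph q"
begin

abbreviation d :: "'a \<Rightarrow> 'a \<Rightarrow> nat" where "d \<equiv> gdist q"

definition closed_nbhd :: "'a \<Rightarrow> 'a set" where
  "closed_nbhd x = insert x {y. 0 < q x y}"

lemma self_mem_closed_nbhd [simp]: "x \<in> closed_nbhd x"
  by (simp add: closed_nbhd_def)

lemma weight_nonneg: "0 \<le> q x y"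
  using graph by (simp add: is_graph_def)

lemma finite_closed_nbhd: "finite (closed_nbhd x)"
  using graph by (simp add: is_graph_def closed_nbhd_def)

lemma weight_eq_0_outside_closed_nbhd: "y \<notin> closed_nbhd x \<Longrightarrow> q x y = 0"
  using weight_nonneg[of x y] by (auto simp: closed_nbhd_def)

lemma laplacian_eq_sum_closed_nbhd:
  "laplacian q g x = (\<Sum>y\<in>closed_nbhd x. q x y * (g y - g x))"
  unfolding laplacian_def closed_nbhd_def
  by (rule sum.mono_neutral_left) (use graph weight_nonneg in \<open>auto simp: is_graph_def order_le_less\<close>)

lemma adj_sym: "adj q x y \<Longrightarrow> adj q y x"
proof -
  obtain m where m: "\<And>x. 0 < m x" "\<And>x y. q x y * m x = q y x * m y"
    using reversible by (auto simp: reversible_def)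
  assume "adj q x y"
  then have "0 < q y x * m y" using m by (metis adj_def mult_pos_pos)
  then show "adj q y x" using m(1)[of y] by (simp add: adj_def zero_less_mult_iff)
qed

lemma gdist_path: "(adj q ^^ d x y) x y"
  unfolding gdist_def using connected by (auto simp: connected_graph_def intro: LeastI_ex)

lemma gdist_le: "(adj q ^^ n) x y \<Longrightarrow> d x y \<le> n"
  unfolding gdist_def by (rule Least_le)

lemma gdist_sym: "d x y = d y x"
  using gdist_le[OF relpowp_sym[OF adj_sym gdist_path]] by (metis le_antisym)

lemma gdist_triangle: "d x z \<le> d x y + d y z"
  using gdist_path[of x y] gdist_path[of y z] by (intro gdist_le) (auto simp: relpowp_add)

lemma gdist_eq_0_iff: "d x y = 0 \<longleftrightarrow> x = y"
  using gdist_path[of x y] gdist_le[of 0 x x] by auto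

lemma gdist_closed_nbhd: "y \<in> closed_nbhd x \<Longrightarrow> d x y \<le> 1"
  using gdist_le[of 1 x y] gdist_le[of 0 x x] by (auto simp: closed_nbhd_def adj_def OO_def)

lemma gdist_closed_nbhd_left:
  "x' \<in> closed_nbhd x \<Longrightarrow> d x' y \<le> d x y + 1 \<and> d x y \<le> d x' y + 1"
  using gdist_closed_nbhd[of x' x] gdist_triangle[of x' y x] gdist_triangle[of x y x'] gdist_sym[of x x']
  by auto

lemma gdist_closed_nbhd_right:
  "y' \<in> closed_nbhd y \<Longrightarrow> d x y' \<le> d x y + 1 \<and> d x y \<le> d x y' + 1"
  using gdist_closed_nbhd_left[of y' y x] by (simp add: gdist_sym)

lemma exists_geodesic_neighbour:
  assumes "x \<noteq> y"
  shows "\<exists>x1. 0 < q x x1 \<and> d x1 y + 1 = d x y"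
proof -
  obtain k where k: "d x y = Suc k" using assms gdist_eq_0_iff by (cases "d x y") auto
  then obtain x1 where x1: "adj q x x1" "(adj q ^^ k) x1 y"
    using gdist_path[of x y] by (metis relpowp_Suc_D2)
  have "d x1 y \<le> k" using x1(2) by (rule gdist_le)
  moreover have "d x y \<le> 1 + d x1 y"
    using gdist_triangle[of x y x1] gdist_le[of 1 x x1] x1(1) by (auto simp: OO_def)
  ultimately show ?thesis using k x1(1) by (auto simp: adj_def)
qed

lemma gdist_exchange:
  assumes x: "x \<in> closed_nbhd x0" and y: "y \<in> closed_nbhd y0"
    and "d x y + 2 = d x0 y0 \<or> d x y = d x0 y0 + 2 \<or> d x y0 + 1 = d x0 y0 \<or> d x0 y + 1 = d x0 y0"
  shows "d x y0 + d x0 y \<le> d x y + d x0 y0"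
  using assms(3) gdist_closed_nbhd_left[OF x, of y0] gdist_closed_nbhd_left[OF x, of y]
    gdist_closed_nbhd_right[OF y, of x0] gdist_closed_nbhd_right[OF y, of x]
  by linarith

definition local_plan :: "'a \<Rightarrow> 'a \<Rightarrow> ('a \<times> 'a \<Rightarrow> real) \<Rightarrow> bool" where
  "local_plan x0 y0 \<rho> \<longleftrightarrow> (\<forall>p. 0 \<le> \<rho> p) \<and>
     (\<forall>p. p \<notin> closed_nbhd x0 \<times> closed_nbhd y0 \<longrightarrow> \<rho> p = 0) \<and>
     (\<forall>x. x \<noteq> x0 \<longrightarrow> (\<Sum>y\<in>closed_nbhd y0. \<rho> (x, y)) = q x0 x) \<and>
     (\<forall>y. y \<noteq> y0 \<longrightarrow> (\<Sum>x\<in>closed_nbhd x0. \<rho> (x, y)) = q y0 y)"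

definition local_cost :: "'a \<Rightarrow> 'a \<Rightarrow> ('a \<times> 'a \<Rightarrow> real) \<Rightarrow> real" where
  "local_cost x0 y0 \<rho> =
     (\<Sum>(x, y)\<in>closed_nbhd x0 \<times> closed_nbhd y0. \<rho> (x, y) * (real (d x0 y0) - real (d x y)))"

lemma local_plan_nonneg: "local_plan x0 y0 \<rho> \<Longrightarrow> 0 \<le> \<rho> p"
  unfolding local_plan_def by blast

lemma local_plan_vanishes_outside:
  "local_plan x0 y0 \<rho> \<Longrightarrow> p \<notin> closed_nbhd x0 \<times> closed_nbhd y0 \<Longrightarrow> \<rho> p = 0"
  unfolding local_plan_def by blast

lemma local_plan_support:
  assumes "local_plan x0 y0 \<rho>"
  shows "{p. 0 < \<rho> p} \<subseteq> closed_nbhd x0 \<times> closed_nbhd y0"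
proof
  fix p assume "p \<in> {p. 0 < \<rho> p}"
  then show "p \<in> closed_nbhd x0 \<times> closed_nbhd y0"
    using local_plan_vanishes_outside[OF assms, of p] by auto
qed

lemma local_plan_row_sum:
  "local_plan x0 y0 \<rho> \<Longrightarrow> x \<noteq> x0 \<Longrightarrow> (\<Sum>y\<in>closed_nbhd y0. \<rho> (x, y)) = q x0 x"
  by (simp add: local_plan_def)

lemma local_plan_column_sum:
  "local_plan x0 y0 \<rho> \<Longrightarrow> y \<noteq> y0 \<Longrightarrow> (\<Sum>x\<in>closed_nbhd x0. \<rho> (x, y)) = q y0 y"
  by (simp add: local_plan_def)

lemma local_plan_swap: "local_plan x0 y0 \<rho> \<Longrightarrow> local_plan y0 x0 (\<rho> \<circ> prod.swap)"
  by (auto simp: local_plan_def)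

lemma transport_plan_vanishes_outside:
  assumes "transport_plan q x0 y0 \<rho>" and outside: "(x, y) \<notin> closed_nbhd x0 \<times> closed_nbhd y0"
  shows "\<rho> (x, y) = 0"
proof -
  have nonneg: "\<And>p. 0 \<le> \<rho> p"
    and row: "\<And>x. x \<noteq> x0 \<Longrightarrow> ((\<lambda>y. \<rho> (x, y)) has_sum q x0 x) UNIV"
    and col: "\<And>y. y \<noteq> y0 \<Longrightarrow> ((\<lambda>x. \<rho> (x, y)) has_sum q y0 y) UNIV"
    using assms(1) by (auto simp: transport_plan_def)
  show ?thesis
  proof (cases "x \<in> closed_nbhd x0")
    case True
    then have "y \<notin> closed_nbhd y0" "y \<noteq> y0" using outside by auto
    then have "\<rho> (x, y) \<le> q y0 y"
      using nonneg by (intro has_sum_nonneg_term_le[OF _ col]) auto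
    then show ?thesis
      using nonneg[of "(x, y)"] weight_eq_0_outside_closed_nbhd \<open>y \<notin> closed_nbhd y0\<close> by simp
  next
    case False
    then have "x \<noteq> x0" by auto
    then have "\<rho> (x, y) \<le> q x0 x"
      using nonneg by (intro has_sum_nonneg_term_le[OF _ row]) auto
    then show ?thesis
      using nonneg[of "(x, y)"] weight_eq_0_outside_closed_nbhd False by simp
  qed
qed

lemma transport_plan_iff_local_plan: "transport_plan q x0 y0 \<rho> \<longleftrightarrow> local_plan x0 y0 \<rho>"
proof
  assume tp: "transport_plan q x0 y0 \<rho>"
  then have nonneg: "\<And>p. 0 \<le> \<rho> p"
    and row: "\<And>x. x \<noteq> x0 \<Longrightarrow> ((\<lambda>y. \<rho> (x, y)) has_sum q x0 x) UNIV"
    and col: "\<And>y. y \<noteq> y0 \<Longrightarrow> ((\<lambda>x. \<rho> (x, y)) has_sum q y0 y) UNIV"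
    by (auto simp: transport_plan_def)
  note outside = transport_plan_vanishes_outside[OF tp]
  have "(\<Sum>y\<in>closed_nbhd y0. \<rho> (x, y)) = q x0 x" if "x \<noteq> x0" for x
    using has_sum_unique[OF has_sum_finite_neutralI[of "closed_nbhd y0"] row[OF that]]
      outside finite_closed_nbhd by fastforce
  moreover have "(\<Sum>x\<in>closed_nbhd x0. \<rho> (x, y)) = q y0 y" if "y \<noteq> y0" for y
    using has_sum_unique[OF has_sum_finite_neutralI[of "closed_nbhd x0"] col[OF that]]
      outside finite_closed_nbhd by fastforce
  ultimately show "local_plan x0 y0 \<rho>"
    using nonneg outside by (auto simp: local_plan_def)
next
  assume lp: "local_plan x0 y0 \<rho>"
  show "transport_plan q x0 y0 \<rho>"
    unfolding transport_plan_def
  proof (intro conjI allI impI)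
    show "((\<lambda>y. \<rho> (x, y)) has_sum q x0 x) UNIV" if "x \<noteq> x0" for x
      using lp that finite_closed_nbhd local_plan_vanishes_outside[OF lp]
      by (intro has_sum_finite_neutralI[of "closed_nbhd y0"]) (auto simp: local_plan_row_sum)
    show "((\<lambda>x. \<rho> (x, y)) has_sum q y0 y) UNIV" if "y \<noteq> y0" for y
      using lp that finite_closed_nbhd local_plan_vanishes_outside[OF lp]
      by (intro has_sum_finite_neutralI[of "closed_nbhd x0"]) (auto simp: local_plan_column_sum)
  qed (rule local_plan_nonneg[OF lp])
qed

lemma tp_cost_eq_local_cost:
  assumes "local_plan x0 y0 \<rho>"
  shows "tp_cost q x0 y0 \<rho> = local_cost x0 y0 \<rho>"
proof -
  have "tp_cost q x0 y0 \<rho> =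
      (\<Sum>\<^sub>\<infinity>(x, y)\<in>closed_nbhd x0 \<times> closed_nbhd y0. \<rho> (x, y) * (real (d x0 y0) - real (d x y)))"
    unfolding tp_cost_def using local_plan_vanishes_outside[OF assms]
    by (intro infsum_cong_neutral) force+
  then show ?thesis by (simp add: local_cost_def finite_closed_nbhd)
qed

lemma optimal_plan_iff_local:
  "optimal_plan q x0 y0 \<rho> \<longleftrightarrow>
     local_plan x0 y0 \<rho> \<and> (\<forall>\<rho>'. local_plan x0 y0 \<rho>' \<longrightarrow> local_cost x0 y0 \<rho>' \<le> local_cost x0 y0 \<rho>)"
  by (auto simp: optimal_plan_def transport_plan_iff_local_plan tp_cost_eq_local_cost)

lemma closed_local_plans: "closed {\<rho>. local_plan x0 y0 \<rho>}"
  unfolding local_plan_def Collect_conj_eq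
  by (intro closed_Int closed_Collect_all closed_Collect_imp closed_Collect_le closed_Collect_eq
      continuous_intros) auto

lemma local_plan_le_weights:
  assumes lp: "local_plan x0 y0 \<rho>" and "\<rho> (x0, y0) = 0"
  shows "\<rho> (x, y) \<le> q x0 x + q y0 y"
proof (cases "(x, y) \<in> closed_nbhd x0 \<times> closed_nbhd y0")
  case True
  have "\<rho> (x, y) \<le> (\<Sum>y'\<in>closed_nbhd y0. \<rho> (x, y'))" "\<rho> (x, y) \<le> (\<Sum>x'\<in>closed_nbhd x0. \<rho> (x', y))"
    using True local_plan_nonneg[OF lp] by (auto intro!: member_le_sum simp: finite_closed_nbhd)
  then show ?thesis
    using assms local_plan_row_sum[OF lp, of x] local_plan_column_sum[OF lp, of y]
      weight_nonneg[of x0 x] weight_nonneg[of y0 y]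
    by (cases "x = x0"; cases "y = y0") auto
next
  case False
  then show ?thesis using local_plan_vanishes_outside[OF lp] weight_nonneg by simp
qed

text \<open>The entry \<open>\<rho> (x0, y0)\<close> is unbounded but carries no cost, so it suffices to maximise over
  the compact set of local plans vanishing there.\<close>
lemma exists_optimal_plan: "\<exists>\<rho>. optimal_plan q x0 y0 \<rho>"
proof -
  define K where "K = {\<rho>. local_plan x0 y0 \<rho> \<and> \<rho> (x0, y0) = 0}"
  define \<rho>0 where "\<rho>0 = (\<lambda>(x, y).
    if y = y0 \<and> x \<noteq> x0 then q x0 x else if x = x0 \<and> y \<noteq> y0 then q y0 y else 0)"
  have K_eq: "K = {\<rho>. \<forall>p. \<rho> p \<in> {0..q x0 (fst p) + q y0 (snd p)}} \<inter>
      ({\<rho>. local_plan x0 y0 \<rho>} \<inter> {\<rho>. \<rho> (x0, y0) = 0})"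
    unfolding K_def using local_plan_nonneg local_plan_le_weights by fastforce
  have closed: "closed ({\<rho>. local_plan x0 y0 \<rho>} \<inter> {\<rho>. \<rho> (x0, y0) = 0})"
    by (intro closed_Int closed_local_plans closed_Collect_eq continuous_on_product_coordinates
        continuous_on_const)
  have compact: "compact K"
    unfolding K_eq by (rule compact_Int_closed[OF compact_nonneg_box closed])
  have "\<rho>0 \<in> K"
    unfolding K_def local_plan_def
    by (auto simp: \<rho>0_def weight_nonneg weight_eq_0_outside_closed_nbhd sum.If_cases finite_closed_nbhd)
  then have nonempty: "K \<noteq> {}" by blast
  have cont: "continuous_on K (local_cost x0 y0)"
    unfolding local_cost_def case_prod_beta
    by (intro continuous_intros continuous_on_subset[OF continuous_on_product_coordinates]) auto
  obtain \<rho> where \<rho>: "\<rho> \<in> K" "\<And>\<rho>'. \<rho>' \<in> K \<Longrightarrow> local_cost x0 y0 \<rho>' \<le> local_cost x0 y0 \<rho>"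
    using continuous_attains_sup[OF compact nonempty cont] by blast
  have "local_cost x0 y0 \<rho>' \<le> local_cost x0 y0 \<rho>" if lp: "local_plan x0 y0 \<rho>'" for \<rho>'
  proof -
    have "\<rho>'((x0, y0) := 0) \<in> K"
      using lp unfolding K_def local_plan_def by (auto intro: sum.cong)
    moreover have "local_cost x0 y0 (\<rho>'((x0, y0) := 0)) = local_cost x0 y0 \<rho>'"
      unfolding local_cost_def by (intro sum.cong) auto
    ultimately show ?thesis using \<rho>(2) by metis
  qed
  then show ?thesis using \<rho>(1) by (auto simp: optimal_plan_iff_local K_def)
qed

lemma local_plan_shift_to_axes:
  assumes lp: "local_plan x0 y0 \<rho>" and s: "\<And>p. 0 \<le> s p" "\<And>p. s p \<le> \<rho> p"
  shows "local_plan x0 y0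
    (\<lambda>p. \<rho> p + shift_to_axes (closed_nbhd x0) (closed_nbhd y0) x0 y0 s p)"
proof -
  have s_outside: "s p = 0" if "p \<notin> closed_nbhd x0 \<times> closed_nbhd y0" for p
    using s[of p] local_plan_vanishes_outside[OF lp that] by simp
  show ?thesis
    unfolding local_plan_def
  proof (intro conjI allI impI)
    fix p :: "'a \<times> 'a"
    obtain x y where p: "p = (x, y)" by fastforce
    have "0 \<le> (\<Sum>y'\<in>closed_nbhd y0. s (x, y'))" "0 \<le> (\<Sum>x'\<in>closed_nbhd x0. s (x', y))"
      using s by (simp_all add: sum_nonneg)
    then show "0 \<le> \<rho> p + shift_to_axes (closed_nbhd x0) (closed_nbhd y0) x0 y0 s p"
      using s(2)[of p] unfolding p by (cases "x = x0"; cases "y = y0") (simp_all add: shift_to_axes_def)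
  next
    fix p assume "p \<notin> closed_nbhd x0 \<times> closed_nbhd y0"
    then show "\<rho> p + shift_to_axes (closed_nbhd x0) (closed_nbhd y0) x0 y0 s p = 0"
      using local_plan_vanishes_outside[OF lp] s_outside
      by (cases p) (auto simp: shift_to_axes_def)
  next
    fix x assume "x \<noteq> x0"
    then show "(\<Sum>y\<in>closed_nbhd y0.
        \<rho> (x, y) + shift_to_axes (closed_nbhd x0) (closed_nbhd y0) x0 y0 s (x, y)) = q x0 x"
      by (simp add: sum.distrib shift_to_axes_row_sum finite_closed_nbhd local_plan_row_sum[OF lp])
  next
    fix y assume "y \<noteq> y0"
    then show "(\<Sum>x\<in>closed_nbhd x0.
        \<rho> (x, y) + shift_to_axes (closed_nbhd x0) (closed_nbhd y0) x0 y0 s (x, y)) = q y0 y"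
      by (simp add: sum.distrib shift_to_axes_column_sum finite_closed_nbhd local_plan_column_sum[OF lp])
  qed
qed

lemma local_cost_shift_to_axes:
  "local_cost x0 y0 (\<lambda>p. \<rho> p + shift_to_axes (closed_nbhd x0) (closed_nbhd y0) x0 y0 s p) =
   local_cost x0 y0 \<rho> + (\<Sum>(x, y)\<in>closed_nbhd x0 \<times> closed_nbhd y0.
     s (x, y) * (real (d x0 y0) + real (d x y) - real (d x y0) - real (d x0 y)))"
proof -
  have "(\<Sum>p\<in>closed_nbhd x0 \<times> closed_nbhd y0.
      shift_to_axes (closed_nbhd x0) (closed_nbhd y0) x0 y0 s p * (real (d x0 y0) - real (d (fst p) (snd p))))
    = (\<Sum>(x, y)\<in>closed_nbhd x0 \<times> closed_nbhd y0.
      s (x, y) * (real (d x0 y0) + real (d x y) - real (d x y0) - real (d x0 y)))"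
    by (subst shift_to_axes_weighted_sum) (auto simp: finite_closed_nbhd algebra_simps)
  then show ?thesis
    by (simp add: local_cost_def case_prod_beta sum.distrib distrib_right)
qed

lemma exists_optimal_plan_vanishing_on:
  assumes off_axes: "\<And>x y. (x, y) \<in> T \<Longrightarrow> x \<noteq> x0 \<and> y \<noteq> y0"
    and exchange: "\<And>x y. (x, y) \<in> T \<Longrightarrow> x \<in> closed_nbhd x0 \<Longrightarrow> y \<in> closed_nbhd y0 \<Longrightarrow>
      d x y0 + d x0 y \<le> d x y + d x0 y0"
  shows "\<exists>\<rho>. optimal_plan q x0 y0 \<rho> \<and> (\<forall>p\<in>T. \<rho> p = 0)"
proof -
  obtain \<rho> where opt: "optimal_plan q x0 y0 \<rho>" using exists_optimal_plan by blast
  then have lp: "local_plan x0 y0 \<rho>" by (simp add: optimal_plan_iff_local)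
  define s where "s p = (if p \<in> T then \<rho> p else 0)" for p
  define \<rho>' where "\<rho>' p = \<rho> p + shift_to_axes (closed_nbhd x0) (closed_nbhd y0) x0 y0 s p" for p
  have lp': "local_plan x0 y0 \<rho>'"
    unfolding \<rho>'_def using local_plan_nonneg[OF lp]
    by (intro local_plan_shift_to_axes[OF lp]) (auto simp: s_def)
  have "0 \<le> s (x, y) * (real (d x0 y0) + real (d x y) - real (d x y0) - real (d x0 y))"
    if "(x, y) \<in> closed_nbhd x0 \<times> closed_nbhd y0" for x y
    using that exchange[of x y] local_plan_nonneg[OF lp, of "(x, y)"] by (auto simp: s_def)
  then have "local_cost x0 y0 \<rho> \<le> local_cost x0 y0 \<rho>'"
    unfolding \<rho>'_def local_cost_shift_to_axes by (auto intro!: sum_nonneg)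
  then have "optimal_plan q x0 y0 \<rho>'"
    using opt lp' by (auto simp: optimal_plan_iff_local)
  moreover have "\<rho>' p = 0" if "p \<in> T" for p
    using that off_axes by (cases p) (auto simp: \<rho>'_def s_def shift_to_axes_def)
  ultimately show ?thesis by blast
qed

lemma local_plan_row_concentrated:
  assumes "local_plan x0 y0 \<rho>" and "x \<noteq> x0" and "\<And>y. y \<noteq> y0 \<Longrightarrow> \<rho> (x, y) = 0"
  shows "\<rho> (x, y0) = q x0 x"
  using local_plan_row_sum[OF assms(1,2)] assms(3)
  by (simp add: sum.remove[OF finite_closed_nbhd self_mem_closed_nbhd])

lemma local_plan_column_concentrated:
  assumes lp: "local_plan x0 y0 \<rho>" and "y \<noteq> y0" and "\<And>x. x \<noteq> x0 \<Longrightarrow> \<rho> (x, y) = 0"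
  shows "\<rho> (x0, y) = q y0 y"
  using local_plan_row_concentrated[OF local_plan_swap[OF lp] assms(2)] assms(3) by simp

lemma tp_mu_eq_sum:
  assumes "local_plan x0 y0 \<rho>"
  shows "tp_mu q x0 y0 \<rho> k =
    sum \<rho> ({(x, y). int (d x y) - int (d x0 y0) = k} \<inter> closed_nbhd x0 \<times> closed_nbhd y0)"
proof -
  have "tp_mu q x0 y0 \<rho> k =
      infsum \<rho> ({(x, y). int (d x y) - int (d x0 y0) = k} \<inter> closed_nbhd x0 \<times> closed_nbhd y0)"
    unfolding tp_mu_def using local_plan_vanishes_outside[OF assms]
    by (intro infsum_cong_neutral) force+
  then show ?thesis by (simp add: finite_closed_nbhd)
qed

lemma geodesic_steps_le_tp_mu:
  assumes lp: "local_plan x0 y0 \<rho>"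
    and x1: "0 < q x0 x1" "d x1 y0 + 1 = d x0 y0" and y1: "0 < q y0 y1" "d x0 y1 + 1 = d x0 y0"
  shows "\<rho> (x1, y0) + \<rho> (x0, y1) \<le> tp_mu q x0 y0 \<rho> (-1)"
proof -
  have "x1 \<noteq> x0" using x1(2) by auto
  then have "\<rho> (x1, y0) + \<rho> (x0, y1) = sum \<rho> {(x1, y0), (x0, y1)}" by simp
  also have "\<dots> \<le> tp_mu q x0 y0 \<rho> (-1)"
    unfolding tp_mu_eq_sum[OF lp] using x1 y1
    by (intro sum_mono2 finite_Int[OF disjI2] finite_cartesian_product finite_closed_nbhd)
      (auto simp: closed_nbhd_def local_plan_nonneg[OF lp])
  finally show ?thesis .
qed

definition perfect_plan :: "'a \<Rightarrow> 'a \<Rightarrow> ('a \<times> 'a \<Rightarrow> real) \<Rightarrow> bool" where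
  "perfect_plan x0 y0 \<rho> \<longleftrightarrow> optimal_plan q x0 y0 \<rho> \<and>
     (\<forall>k. \<bar>k\<bar> > 1 \<longrightarrow> tp_mu q x0 y0 \<rho> k = 0) \<and>
     (x0 \<noteq> y0 \<longrightarrow> tp_mu q x0 y0 \<rho> (-1) \<ge> 2 * qmin q)"

lemma exists_perfect_plan: "\<exists>\<rho>. perfect_plan x0 y0 \<rho>"
proof -
  define D where "D = d x0 y0"
  define T where "T = {(x, y). x \<noteq> x0 \<and> y \<noteq> y0 \<and>
    (d x y + 2 = D \<or> d x y = D + 2 \<or> d x y0 + 1 = D \<or> d x0 y + 1 = D)}"
  have "\<exists>\<rho>. optimal_plan q x0 y0 \<rho> \<and> (\<forall>p\<in>T. \<rho> p = 0)"
    by (rule exists_optimal_plan_vanishing_on) (auto simp: T_def D_def intro: gdist_exchange)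
  then obtain \<rho> where opt: "optimal_plan q x0 y0 \<rho>" and vanish: "\<And>p. p \<in> T \<Longrightarrow> \<rho> p = 0"
    by blast
  then have lp: "local_plan x0 y0 \<rho>" by (simp add: optimal_plan_iff_local)
  have close: "\<bar>int (d x y) - int D\<bar> \<le> 1"
    if "(x, y) \<in> closed_nbhd x0 \<times> closed_nbhd y0" "(x, y) \<notin> T" for x y
    using that gdist_closed_nbhd_left[of x x0 y] gdist_closed_nbhd_left[of x x0 y0]
      gdist_closed_nbhd_right[of y y0 x0]
    by (auto simp: T_def D_def)
  have "tp_mu q x0 y0 \<rho> k = 0" if "\<bar>k\<bar> > 1" for k
    unfolding tp_mu_eq_sum[OF lp]
    by (rule sum.neutral) (use that close vanish in \<open>force simp: D_def\<close>)
  moreover have "2 * qmin q \<le> tp_mu q x0 y0 \<rho> (-1)" if ne: "x0 \<noteq> y0"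
  proof -
    obtain x1 where x1: "0 < q x0 x1" "d x1 y0 + 1 = D"
      using exists_geodesic_neighbour[OF ne] by (auto simp: D_def)
    obtain y1 where y1: "0 < q y0 y1" "d x0 y1 + 1 = D"
      using exists_geodesic_neighbour[of y0 x0] ne by (auto simp: D_def gdist_sym)
    have "x1 \<noteq> x0" using x1 by (auto simp: D_def)
    have "y1 \<noteq> y0" using y1 by (auto simp: D_def)
    have "\<rho> (x1, y0) = q x0 x1"
      using \<open>x1 \<noteq> x0\<close> x1 vanish by (intro local_plan_row_concentrated[OF lp]) (auto simp: T_def)
    moreover have "\<rho> (x0, y1) = q y0 y1"
      using \<open>y1 \<noteq> y0\<close> y1 vanish by (intro local_plan_column_concentrated[OF lp]) (auto simp: T_def)
    moreover have "\<rho> (x1, y0) + \<rho> (x0, y1) \<le> tp_mu q x0 y0 \<rho> (-1)"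
      using x1 y1 by (intro geodesic_steps_le_tp_mu[OF lp]) (auto simp: D_def)
    ultimately show ?thesis using qmin_le[of q, OF x1(1)] qmin_le[of q, OF y1(1)] by linarith
  qed
  ultimately show ?thesis using opt by (auto simp: perfect_plan_def)
qed

lemma local_plan_laplacian_fst:
  assumes lp: "local_plan x0 y0 \<rho>"
  shows "(\<Sum>p\<in>{p. 0 < \<rho> p}. \<rho> p * (g (fst p) - g x0)) = laplacian q g x0"
proof -
  have "(\<Sum>p\<in>{p. 0 < \<rho> p}. \<rho> p * (g (fst p) - g x0)) =
      (\<Sum>p\<in>closed_nbhd x0 \<times> closed_nbhd y0. \<rho> p * (g (fst p) - g x0))"
    using local_plan_support[OF lp] local_plan_nonneg[OF lp, THEN order.order_iff_strict[THEN iffD1]]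
    by (intro sum.mono_neutral_left) (auto simp: finite_closed_nbhd)
  also have "\<dots> = (\<Sum>x\<in>closed_nbhd x0. (\<Sum>y\<in>closed_nbhd y0. \<rho> (x, y)) * (g x - g x0))"
    by (simp add: sum.cartesian_product' sum_distrib_right)
  also have "\<dots> = (\<Sum>x\<in>closed_nbhd x0. q x0 x * (g x - g x0))"
    by (intro sum.cong refl) (metis local_plan_row_sum[OF lp] diff_self mult_zero_right)
  finally show ?thesis by (simp add: laplacian_eq_sum_closed_nbhd)
qed

lemma local_plan_laplacian_snd:
  assumes lp: "local_plan x0 y0 \<rho>"
  shows "(\<Sum>p\<in>{p. 0 < \<rho> p}. \<rho> p * (g (snd p) - g y0)) = laplacian q g y0"
proof -
  have "(\<Sum>p\<in>{p. 0 < \<rho> p}. \<rho> p * (g (snd p) - g y0)) =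
      (\<Sum>p\<in>{p. 0 < (\<rho> \<circ> prod.swap) p}. (\<rho> \<circ> prod.swap) p * (g (fst p) - g y0))"
    by (rule sum.reindex_bij_witness[of _ prod.swap prod.swap]) auto
  then show ?thesis using local_plan_laplacian_fst[OF local_plan_swap[OF lp]] by simp
qed

lemma coupling_graph_of_local_plans:
  assumes lp: "\<And>x0 y0. local_plan x0 y0 (qt (x0, y0))"
  shows "coupling_graph q qt"
  unfolding coupling_graph_def
proof (intro conjI allI ext)
  show "is_graph qt"
    unfolding is_graph_def
  proof (intro conjI allI)
    fix p p' :: "'a \<times> 'a"
    show "0 \<le> qt p p'" using local_plan_nonneg[OF lp[of "fst p" "snd p"]] by simp
    have "{p'. 0 < qt p p'} \<subseteq> closed_nbhd (fst p) \<times> closed_nbhd (snd p)"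
      using local_plan_support[OF lp[of "fst p" "snd p"]] by simp
    then show "finite {p'. 0 < qt p p'}"
      by (rule finite_subset) (simp add: finite_closed_nbhd)
  qed
next
  fix f :: "'a \<Rightarrow> real" and p :: "'a \<times> 'a"
  show "laplacian qt (tensor f (\<lambda>_. 1)) p = tensor (laplacian q f) (\<lambda>_. 1) p"
    using local_plan_laplacian_fst[OF lp[of "fst p" "snd p"], of f]
    by (simp add: laplacian_def[of qt] tensor_def case_prod_beta)
  show "laplacian qt (tensor (\<lambda>_. 1) f) p = tensor (\<lambda>_. 1) (laplacian q f) p"
    using local_plan_laplacian_snd[OF lp[of "fst p" "snd p"], of f]
    by (simp add: laplacian_def[of qt] tensor_def case_prod_beta)
qed

end

theorem mainTheorem3:
  fixes q :: "'a::countable \<Rightarrow> 'a \<Rightarrow> real"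
  assumes "is_graph q" and "reversible q" and "connected_graph q"
  shows "\<exists>qt. perfect_coupling q qt"
proof -
  interpret reversible_connected_graph q using assms by unfold_locales
  obtain qt where qt: "\<And>x0 y0. perfect_plan x0 y0 (qt (x0, y0))"
    using choice[of "\<lambda>p \<rho>. perfect_plan (fst p) (snd p) \<rho>"] exists_perfect_plan by fastforce
  then have "coupling_graph q qt"
    by (intro coupling_graph_of_local_plans) (simp add: perfect_plan_def optimal_plan_iff_local)
  then show ?thesis
    using qt by (auto simp: perfect_coupling_def perfect_plan_def)
qed

end
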